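(* Let $\gamma\in C^{2}(\mathbb{R})$ be either an odd or an even function which is convex on $(0,\infty)$ and satisfies: (i) $\gamma(0)=\gamma'(0)=0$; (ii) $\frac{\gamma''(t)}{\gamma'(t)}$ is decreasing on $(0,\infty)$; (iii) there is a constant $C_1>0$ with $\frac{t\gamma''(t)}{\gamma'(t)}\geq C_1$ for all $t\in(0,\infty)$; (iv) $\gamma''$ is monotone on $(0,\infty)$. Fix $x,y\in\mathbb{R}$, a real number $\omega>0$ and an integer $k\geq 0$, and for $z$ with $1\leq z-y<z-x\leq 2$ set $$\Upsilon(z):=\frac{\gamma(\omega 2^k (z-x))-\gamma(\omega 2^k(z-y))}{\omega 2^k\gamma'(\omega 2^k(z-x))-\omega 2^k\gamma'(\omega 2^k(z-y))}.$$ Then $\Upsilon$ is increasing on the set $\{z:1\leq z-y<z-x\leq 2\}$, and $\Upsilon(z)\leq \frac{2}{C_1}$ on this set, uniformly in $\omega$ and $k$. *)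

theory Defs
  imports "HOL-Analysis.Analysis"
begin

text \<open>The quotient Upsilon(z) of the paper, with scale a = omega * 2^k;
  g1 denotes the derivative of g.\<close>
definition Upsilon :: "(real \<Rightarrow> real) \<Rightarrow> (real \<Rightarrow> real) \<Rightarrow> real \<Rightarrow> nat \<Rightarrow> real \<Rightarrow> real \<Rightarrow> real \<Rightarrow> real"
  where "Upsilon g g1 \<omega> k x y z =
    (g (\<omega> * 2^k * (z - x)) - g (\<omega> * 2^k * (z - y))) /
    (\<omega> * 2^k * g1 (\<omega> * 2^k * (z - x)) - \<omega> * 2^k * g1 (\<omega> * 2^k * (z - y)))"

end

theory Submission
  imports Defs
begin

(* Put u = a(z - x) > v = a(z - y) > 0 with a = omega 2^k. Convexity and gamma'(0) = 0 make
   gamma' nonnegative on (0, oo), and (iii) then forces gamma' > 0 and gamma'' > 0 there.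
   By the Cauchy mean value theorem (gamma u - gamma v) / (gamma' u - gamma' v) is the value of
   gamma'/gamma'' at a point between v and u, hence at most u / C1 <= 2a / C1 by (iii), which gives
   Upsilon <= 2 / C1, and at most gamma'(u) / gamma''(u) by (ii). The latter bound makes
   (gamma' u - gamma' v)^2 - (gamma u - gamma v) (gamma'' u - gamma'' v), the numerator of the
   z-derivative of Upsilon up to a positive factor, nonnegative, so Upsilon is increasing. *)

lemma convex_on_deriv_mono:
  fixes f :: "real \<Rightarrow> real"
  assumes cvx: "convex_on A f" and conn: "connected A"
    and st: "s \<in> interior A" "t \<in> interior A" "s \<le> t"
    and ds: "(f has_real_derivative ds) (at s)" and dt: "(f has_real_derivative dt) (at t)"
  shows "ds \<le> dt"
proof (cases "s = t")
  case True
  with ds dt show ?thesis by (metis DERIV_unique order.refl)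
next
  case False
  have "f t - f s \<ge> ds * (t - s)"
    using st interior_subset ds
    by (intro convex_on_imp_above_tangent[OF cvx conn]) (auto intro: has_field_derivative_at_within)
  moreover have "f s - f t \<ge> dt * (s - t)"
    using st interior_subset dt
    by (intro convex_on_imp_above_tangent[OF cvx conn]) (auto intro: has_field_derivative_at_within)
  ultimately have "(ds - dt) * (t - s) \<le> 0" by (simp add: algebra_simps)
  with False st(3) show ?thesis by (simp add: mult_le_0_iff)
qed

lemma mono_on_greaterThan_right_limit_le:
  fixes g :: "real \<Rightarrow> real"
  assumes mono: "mono_on {a<..} g" and cont: "continuous (at_right a) g" and "a < t"
  shows "g a \<le> g t"
proof (rule tendsto_upperbound)
  show "(g \<longlongrightarrow> g a) (at_right a)"
    using cont by (simp add: continuous_within)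
  show "\<forall>\<^sub>F s in at_right a. g s \<le> g t"
    using eventually_at_right_real[OF \<open>a < t\<close>]
    by eventually_elim (auto intro: mono_onD[OF mono])
qed simp

lemma convex_derivs_pos_of_elasticity_ge:
  fixes f f' f'' :: "real \<Rightarrow> real" and C t :: real
  assumes cvx: "convex_on {0<..} f"
    and d1: "\<And>t. (f has_real_derivative f' t) (at t)"
    and d2: "\<And>t. (f' has_real_derivative f'' t) (at t)"
    and "f' 0 = 0" and "0 < C" and elasticity: "\<And>t. 0 < t \<Longrightarrow> C \<le> t * f'' t / f' t"
    and "0 < t"
  shows "0 < f' t \<and> 0 < f'' t"
proof -
  have "mono_on {0<..} f'"
    by (intro mono_onI convex_on_deriv_mono[OF cvx _ _ _ _ d1 d1]) (auto simp: interior_open)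
  moreover have "continuous (at_right 0) f'"
    using DERIV_isCont[OF d2] by (simp add: continuous_at_imp_continuous_within)
  ultimately have "0 \<le> f' t"
    using mono_on_greaterThan_right_limit_le \<open>0 < t\<close> \<open>f' 0 = 0\<close> by metis
  moreover have "0 < t * f'' t / f' t"
    using elasticity[OF \<open>0 < t\<close>] \<open>0 < C\<close> by linarith
  ultimately show ?thesis
    using \<open>0 < t\<close> by (auto simp: zero_less_divide_iff zero_less_mult_iff)
qed

text \<open>Condition (ii) of the paper says that \<open>ln f'\<close> is concave on \<open>(0, \<infinity>)\<close>.\<close>

locale log_concave_deriv =
  fixes f f' f'' :: "real \<Rightarrow> real"
  assumes has_deriv: "\<And>t. (f has_real_derivative f' t) (at t)"
    and has_deriv2: "\<And>t. (f' has_real_derivative f'' t) (at t)"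
    and deriv_pos: "\<And>t. 0 < t \<Longrightarrow> 0 < f' t"
    and deriv2_pos: "\<And>t. 0 < t \<Longrightarrow> 0 < f'' t"
    and ratio_antimono: "\<And>s t. 0 < s \<Longrightarrow> s \<le> t \<Longrightarrow> f'' t / f' t \<le> f'' s / f' s"
begin

lemma increments_pos:
  assumes "0 < v" "v < u"
  shows "0 < f u - f v" and "0 < f' u - f' v"
proof -
  have pos: "0 < t" if "v \<le> t" for t
    using assms that by linarith
  have "f v < f u"
    using \<open>v < u\<close> by (rule DERIV_pos_imp_increasing) (metis has_deriv deriv_pos pos)
  then show "0 < f u - f v" by simp
  have "f' v < f' u"
    using \<open>v < u\<close> by (rule DERIV_pos_imp_increasing) (metis has_deriv2 deriv2_pos pos)
  then show "0 < f' u - f' v" by simp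
qed

lemma increment_le_Cauchy_bound:
  assumes "0 < v" "v < u" and bound: "\<And>t. v < t \<Longrightarrow> t < u \<Longrightarrow> f' t / f'' t \<le> B"
  shows "f u - f v \<le> B * (f' u - f' v)"
proof -
  obtain \<xi> where \<xi>: "v < \<xi>" "\<xi> < u" and cauchy: "(f u - f v) * f'' \<xi> = (f' u - f' v) * f' \<xi>"
    using GMVT'[of v u f f' f'' f'] assms(2) has_deriv has_deriv2 DERIV_isCont by blast
  have "0 < f'' \<xi>" using deriv2_pos \<xi> assms(1) by simp
  then have "f u - f v = (f' u - f' v) * (f' \<xi> / f'' \<xi>)"
    using cauchy by (simp add: field_simps)
  also have "\<dots> \<le> (f' u - f' v) * B"
    using bound[OF \<xi>] increments_pos[OF assms(1,2)] by (intro mult_left_mono) auto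
  finally show ?thesis by (simp add: mult.commute)
qed

lemma increment_le_right_end:
  assumes "0 < v" "v < u"
  shows "f u - f v \<le> f' u / f'' u * (f' u - f' v)"
proof (rule increment_le_Cauchy_bound[OF assms])
  fix t assume "v < t" "t < u"
  with assms have "0 < t" "0 < f' t" "0 < f'' t" "0 < f' u" "0 < f'' u"
    and "f'' u / f' u \<le> f'' t / f' t"
    using deriv_pos deriv2_pos ratio_antimono[of t u] by auto
  then show "f' t / f'' t \<le> f' u / f'' u"
    by (simp add: field_simps)
qed

lemma increment_le_elasticity_bound:
  assumes "0 < C" and elasticity: "\<And>t. 0 < t \<Longrightarrow> C \<le> t * f'' t / f' t"
    and "0 < v" "v < u"
  shows "f u - f v \<le> u / C * (f' u - f' v)"
proof (rule increment_le_Cauchy_bound[OF assms(3,4)])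
  fix t assume "v < t" "t < u"
  with assms have "0 < t" "0 < f' t" "0 < f'' t" and "C \<le> t * f'' t / f' t"
    using deriv_pos deriv2_pos by auto
  then have "f' t / f'' t \<le> t / C"
    using \<open>0 < C\<close> by (simp add: field_simps)
  also have "\<dots> \<le> u / C"
    using \<open>t < u\<close> \<open>0 < C\<close> by (simp add: divide_right_mono)
  finally show "f' t / f'' t \<le> u / C" .
qed

lemma increment_mul_le_square:
  assumes "0 < v" "v < u"
  shows "(f u - f v) * (f'' u - f'' v) \<le> (f' u - f' v)\<^sup>2"
proof (cases "f'' u \<le> f'' v")
  case True
  then have "(f u - f v) * (f'' u - f'' v) \<le> 0"
    using increments_pos[OF assms] by (simp add: mult_le_0_iff)
  then show ?thesis by (meson order_trans zero_le_power2)
next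
  case False
  have pos: "0 < f' u" "0 < f'' u" "0 < f' v"
    using assms deriv_pos deriv2_pos by auto
  have "f'' u / f' u \<le> f'' v / f' v"
    using ratio_antimono assms by simp
  then have ratio: "f' u / f'' u * (f'' u - f'' v) \<le> f' u - f' v"
    using pos by (simp add: field_simps)
  have "(f u - f v) * (f'' u - f'' v) \<le> f' u / f'' u * (f' u - f' v) * (f'' u - f'' v)"
    using increment_le_right_end[OF assms] False by (intro mult_right_mono) auto
  also have "\<dots> = (f' u / f'' u * (f'' u - f'' v)) * (f' u - f' v)"
    by simp
  also have "\<dots> \<le> (f' u - f' v) * (f' u - f' v)"
    using ratio increments_pos[OF assms] by (intro mult_right_mono) auto
  finally show ?thesis by (simp add: power2_eq_square)
qed

lemma Upsilon_has_real_derivative: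
  fixes \<omega> x y z :: real and k :: nat
  defines "u \<equiv> \<omega> * 2 ^ k * (z - x)" and "v \<equiv> \<omega> * 2 ^ k * (z - y)"
  assumes "\<omega> \<noteq> 0" and "f' u \<noteq> f' v"
  shows "(Upsilon f f' \<omega> k x y has_real_derivative
           ((f' u - f' v)\<^sup>2 - (f u - f v) * (f'' u - f'' v)) / (f' u - f' v)\<^sup>2) (at z)"
proof -
  define a where "a = \<omega> * 2 ^ k"
  have "a \<noteq> 0" using \<open>\<omega> \<noteq> 0\<close> by (simp add: a_def)
  have u: "a * (z - x) = u" and v: "a * (z - y) = v"
    by (simp_all add: u_def v_def a_def)
  have Ups: "Upsilon f f' \<omega> k x y =
      (\<lambda>z. (f (a * (z - x)) - f (a * (z - y))) / (a * (f' (a * (z - x)) - f' (a * (z - y)))))"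
    by (simp add: fun_eq_iff Upsilon_def a_def right_diff_distrib)
  have chain: "((\<lambda>z. h (a * (z - c))) has_real_derivative h' (a * (z - c)) * a) (at z)"
    if "\<And>t. (h has_real_derivative h' t) (at t)" for h h' c
    by (rule DERIV_chain2[OF that]) (auto intro!: derivative_eq_intros)
  have num: "((\<lambda>z. f (a * (z - x)) - f (a * (z - y))) has_real_derivative
      a * (f' u - f' v)) (at z)"
    by (rule DERIV_cong[OF DERIV_diff[OF chain[OF has_deriv] chain[OF has_deriv]]])
      (unfold u v, simp add: algebra_simps)
  have den: "((\<lambda>z. a * (f' (a * (z - x)) - f' (a * (z - y)))) has_real_derivative
      a * (a * (f'' u - f'' v))) (at z)"
    by (rule DERIV_cong[OF DERIV_cmult[OF DERIV_diff[OF chain[OF has_deriv2] chain[OF has_deriv2]]]])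
      (unfold u v, simp add: algebra_simps)
  have "a * (f' (a * (z - x)) - f' (a * (z - y))) \<noteq> 0"
    using \<open>a \<noteq> 0\<close> \<open>f' u \<noteq> f' v\<close> by (simp add: u v)
  from DERIV_divide[OF num den this] have "(Upsilon f f' \<omega> k x y has_real_derivative
      (a * (f' u - f' v) * (a * (f' u - f' v)) - (f u - f v) * (a * (a * (f'' u - f'' v))))
      / (a * (f' u - f' v) * (a * (f' u - f' v)))) (at z)"
    unfolding Ups by (simp only: u v)
  also have "(a * (f' u - f' v) * (a * (f' u - f' v)) - (f u - f v) * (a * (a * (f'' u - f'' v))))
      / (a * (f' u - f' v) * (a * (f' u - f' v)))
      = (a * a * ((f' u - f' v)\<^sup>2 - (f u - f v) * (f'' u - f'' v))) / (a * a * (f' u - f' v)\<^sup>2)"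
    by (simp add: algebra_simps power2_eq_square)
  also have "\<dots> = ((f' u - f' v)\<^sup>2 - (f u - f v) * (f'' u - f'' v)) / (f' u - f' v)\<^sup>2"
    using \<open>a \<noteq> 0\<close> by simp
  finally show ?thesis .
qed

lemma Upsilon_mono_on:
  assumes "0 < \<omega>"
  shows "mono_on {z. 1 \<le> z - y \<and> z - y < z - x \<and> z - x \<le> 2} (Upsilon f f' \<omega> k x y)"
proof (rule mono_onI)
  fix r s
  assume "r \<in> {z. 1 \<le> z - y \<and> z - y < z - x \<and> z - x \<le> 2}"
    and "s \<in> {z. 1 \<le> z - y \<and> z - y < z - x \<and> z - x \<le> 2}" and "r \<le> s"
  then have vu: "0 < \<omega> * 2 ^ k * (z - y)" "\<omega> * 2 ^ k * (z - y) < \<omega> * 2 ^ k * (z - x)"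
    if "r \<le> z" "z \<le> s" for z
    using that \<open>0 < \<omega>\<close> by auto
  show "Upsilon f f' \<omega> k x y r \<le> Upsilon f f' \<omega> k x y s"
  proof (rule DERIV_nonneg_imp_nondecreasing[OF \<open>r \<le> s\<close>])
    fix z assume "r \<le> z" "z \<le> s"
    note vu_z = vu[OF this]
    show "\<exists>d. (Upsilon f f' \<omega> k x y has_real_derivative d) (at z) \<and> 0 \<le> d"
      by (rule exI, rule conjI, rule Upsilon_has_real_derivative)
        (use \<open>0 < \<omega>\<close> increments_pos(2)[OF vu_z] increment_mul_le_square[OF vu_z] in
          \<open>auto intro: divide_nonneg_nonneg\<close>)
  qed
qed

lemma Upsilon_le_elasticity_bound:
  assumes "0 < C" and elasticity: "\<And>t. 0 < t \<Longrightarrow> C \<le> t * f'' t / f' t" and "0 < \<omega>"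
    and z: "1 \<le> z - y" "z - y < z - x" "z - x \<le> 2"
  shows "Upsilon f f' \<omega> k x y z \<le> 2 / C"
proof -
  define a where "a = \<omega> * 2 ^ k"
  define u where "u = a * (z - x)"
  define v where "v = a * (z - y)"
  have "0 < a" using \<open>0 < \<omega>\<close> by (simp add: a_def)
  then have vu: "0 < v" "v < u" and "u \<le> 2 * a"
    using z by (simp_all add: u_def v_def)
  have D: "0 < f' u - f' v" using increments_pos(2)[OF vu] .
  have "f u - f v \<le> u / C * (f' u - f' v)"
    by (rule increment_le_elasticity_bound[OF \<open>0 < C\<close> elasticity vu])
  also have "\<dots> \<le> 2 * a / C * (f' u - f' v)"
    using \<open>u \<le> 2 * a\<close> \<open>0 < C\<close> D by (intro mult_right_mono divide_right_mono) auto
  finally have "(f u - f v) / (a * (f' u - f' v)) \<le> 2 / C"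
    using D \<open>0 < a\<close> \<open>0 < C\<close> by (simp add: divide_le_eq field_simps)
  then show ?thesis
    unfolding Upsilon_def a_def[symmetric] u_def[symmetric] v_def[symmetric]
    by (simp add: right_diff_distrib)
qed

end

theorem lemma3p2:
  fixes \<gamma> \<gamma>' \<gamma>'' :: "real \<Rightarrow> real"
    and C1 \<omega> x y :: real and k :: nat
  assumes d1: "\<And>t. (\<gamma> has_real_derivative \<gamma>' t) (at t)"
    and d2: "\<And>t. (\<gamma>' has_real_derivative \<gamma>'' t) (at t)"
    and cont2: "continuous_on UNIV \<gamma>''"
    and parity: "(\<forall>t. \<gamma> (- t) = - \<gamma> t) \<or> (\<forall>t. \<gamma> (- t) = \<gamma> t)"
    and cvx: "convex_on {0<..} \<gamma>"
    and i: "\<gamma> 0 = 0" "\<gamma>' 0 = 0"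
    and ii: "\<And>s t. 0 < s \<Longrightarrow> s \<le> t \<Longrightarrow> \<gamma>'' t / \<gamma>' t \<le> \<gamma>'' s / \<gamma>' s"
    and C1pos: "C1 > 0"
    and iii: "\<And>t. 0 < t \<Longrightarrow> t * \<gamma>'' t / \<gamma>' t \<ge> C1"
    and iv: "mono_on {0<..} \<gamma>'' \<or> antimono_on {0<..} \<gamma>''"
    and \<omega>pos: "\<omega> > 0"
  shows "mono_on {z. 1 \<le> z - y \<and> z - y < z - x \<and> z - x \<le> 2} (Upsilon \<gamma> \<gamma>' \<omega> k x y)
       \<and> (\<forall>z \<in> {z. 1 \<le> z - y \<and> z - y < z - x \<and> z - x \<le> 2}. Upsilon \<gamma> \<gamma>' \<omega> k x y z \<le> 2 / C1)"
proof -
  have "0 < \<gamma>' t \<and> 0 < \<gamma>'' t" if "0 < t" for t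
    using convex_derivs_pos_of_elasticity_ge[OF cvx d1 d2 i(2) C1pos iii that] .
  with d1 d2 ii interpret log_concave_deriv \<gamma> \<gamma>' \<gamma>''
    by unfold_locales simp_all
  show ?thesis
    using Upsilon_mono_on[OF \<omega>pos] Upsilon_le_elasticity_bound[OF C1pos iii \<omega>pos] by blast
qed

end
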